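(* Let $\alpha>0$, $\kappa>1/2$, $\gamma<3/2$ and $\nu\in\mathbb R$. Then for every $C>1$ there exist $a,b\in\mathbb N$ and $\beta\in(0,1)$ such that for every $C_{\mathrm{start}}\ge1$ and every $C_z\in[0,\infty)$ the parameters $$\lambda_n=a^{(b^n)},\quad r_n=C_{\mathrm{start}}(C_z^2+1)\lambda_0^\beta\lambda_n^{-\beta}\ (n\ge0),\qquad \ell_n=\lambda_n^{-1},\quad \mu_n=\sqrt{\lambda_{n-1}\lambda_n}\ (n\ge1)$$ satisfy, for all $n\ge1$: (R1) $\mu_n\le\lambda_n$; (R2) $\ell_n\le1$; (R3) $\lambda_n\in\mathbb N$, $12\lambda_n\le4\mu_{n+1}$, $10\le\mu_n$, $48\lambda_n\le\lambda_{n+1}$; and $$C\big(\mathfrak E^{\mathrm{miss}}_n+\mathfrak E^{\mathrm{com}}_n+\mathfrak E^{\mathrm{time}}_n+\mathfrak E^{\mathrm{dis}}_n+\mathfrak E^{\mathrm{trans}}_n+\mathfrak E^{\mathrm{sto}}_n\big)\le r_n ,$$ where, with $\mathfrak S_{N,\theta}:=\sum_{k=1}^N4^{N-k}\ell_k^{-\theta}r_{k-1}^{1/2}$ (so $\mathfrak S_{0,\theta}=0$), $$\mathfrak E^{\mathrm{miss}}_n=\Big\{\log\mu_n\Big(\tfrac{\lambda_{n-1}}{\mu_n}+\tfrac{\mu_n}{\lambda_n}\Big)^2+\tfrac{\lambda_{n-1}}{\lambda_n}\Big\}r_{n-1},$$ $$\mathfrak E^{\mathrm{com}}_n=\log(\lambda_n)\lambda_{n-1}\ell_n^\alpha\mathfrak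 S_{n-1,\alpha}\mathfrak S_{n-1,0}+\log(\lambda_n)\lambda_{n-1}^{1/2}\big(\ell_n^\alpha\mathfrak S_{n-1,\alpha}+\lambda_{n-1}^{-\kappa}\mathfrak S_{n-1,0}\big)C_z+\log(\lambda_n)(\ell_n^\alpha+\lambda_{n-1}^{-\kappa})C_z^2,$$ $$\mathfrak E^{\mathrm{time}}_n=\log(\lambda_n)\lambda_n^{-3/2}r_{n-1}^{1/2}\ell_n^{-1},\qquad \mathfrak E^{\mathrm{dis}}_n=\log(\lambda_n)|\nu|\lambda_n^{\gamma-3/2}r_{n-1}^{1/4},$$ $$\mathfrak E^{\mathrm{trans}}_n=\log(\lambda_n)\lambda_{n-1}^{1/2}\lambda_n^{-1/2}r_{n-1}^{1/2}\mathfrak S_{n-1,0},\qquad \mathfrak E^{\mathrm{sto}}_n=\log(\lambda_n)\lambda_n^{-1/2}r_{n-1}^{1/2}C_z.$$ Moreover $b$ can be taken to be any integer with $b>1+1/\alpha$, and $\beta$ can be taken so that $\beta<(\alpha(b-1)-1)/b$.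
   Context: All quantities are real numbers; $\log$ is the natural logarithm. No probabilistic content is involved. *)

theory Defs
  imports Complex_Main
begin

definition lam :: "nat \<Rightarrow> nat \<Rightarrow> nat \<Rightarrow> real" where
  "lam a b n = real a ^ (b ^ n)"

definition rr :: "nat \<Rightarrow> nat \<Rightarrow> real \<Rightarrow> real \<Rightarrow> real \<Rightarrow> nat \<Rightarrow> real" where
  "rr a b \<beta> Cs Cz n = Cs * (Cz\<^sup>2 + 1) * lam a b 0 powr \<beta> * lam a b n powr (- \<beta>)"

definition ell :: "nat \<Rightarrow> nat \<Rightarrow> nat \<Rightarrow> real" where
  "ell a b n = inverse (lam a b n)"

definition mu :: "nat \<Rightarrow> nat \<Rightarrow> nat \<Rightarrow> real" where
  "mu a b n = sqrt (lam a b (n - 1) * lam a b n)"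

definition SS :: "nat \<Rightarrow> nat \<Rightarrow> real \<Rightarrow> real \<Rightarrow> real \<Rightarrow> nat \<Rightarrow> real \<Rightarrow> real" where
  "SS a b \<beta> Cs Cz N \<theta> =
     (\<Sum>k = 1..N. 4 ^ (N - k) * ell a b k powr (- \<theta>) * sqrt (rr a b \<beta> Cs Cz (k - 1)))"

definition E_miss :: "nat \<Rightarrow> nat \<Rightarrow> real \<Rightarrow> real \<Rightarrow> real \<Rightarrow> nat \<Rightarrow> real" where
  "E_miss a b \<beta> Cs Cz n =
     (ln (mu a b n) * (lam a b (n - 1) / mu a b n + mu a b n / lam a b n)\<^sup>2
       + lam a b (n - 1) / lam a b n) * rr a b \<beta> Cs Cz (n - 1)"

definition E_com :: "real \<Rightarrow> real \<Rightarrow> nat \<Rightarrow> nat \<Rightarrow> real \<Rightarrow> real \<Rightarrow> real \<Rightarrow> nat \<Rightarrow> real" where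
  "E_com \<alpha> \<kappa> a b \<beta> Cs Cz n =
     ln (lam a b n) * lam a b (n - 1) * ell a b n powr \<alpha>
        * SS a b \<beta> Cs Cz (n - 1) \<alpha> * SS a b \<beta> Cs Cz (n - 1) 0
   + ln (lam a b n) * sqrt (lam a b (n - 1))
        * (ell a b n powr \<alpha> * SS a b \<beta> Cs Cz (n - 1) \<alpha>
           + lam a b (n - 1) powr (- \<kappa>) * SS a b \<beta> Cs Cz (n - 1) 0) * Cz
   + ln (lam a b n) * (ell a b n powr \<alpha> + lam a b (n - 1) powr (- \<kappa>)) * Cz\<^sup>2"

definition E_time :: "nat \<Rightarrow> nat \<Rightarrow> real \<Rightarrow> real \<Rightarrow> real \<Rightarrow> nat \<Rightarrow> real" where
  "E_time a b \<beta> Cs Cz n =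
     ln (lam a b n) * lam a b n powr (- 3 / 2) * sqrt (rr a b \<beta> Cs Cz (n - 1))
       * inverse (ell a b n)"

definition E_dis :: "real \<Rightarrow> real \<Rightarrow> nat \<Rightarrow> nat \<Rightarrow> real \<Rightarrow> real \<Rightarrow> real \<Rightarrow> nat \<Rightarrow> real" where
  "E_dis \<gamma> \<nu> a b \<beta> Cs Cz n =
     ln (lam a b n) * \<bar>\<nu>\<bar> * lam a b n powr (\<gamma> - 3 / 2) * rr a b \<beta> Cs Cz (n - 1) powr (1 / 4)"

definition E_trans :: "nat \<Rightarrow> nat \<Rightarrow> real \<Rightarrow> real \<Rightarrow> real \<Rightarrow> nat \<Rightarrow> real" where
  "E_trans a b \<beta> Cs Cz n =
     ln (lam a b n) * sqrt (lam a b (n - 1)) * lam a b n powr (- 1 / 2)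
       * sqrt (rr a b \<beta> Cs Cz (n - 1)) * SS a b \<beta> Cs Cz (n - 1) 0"

definition E_sto :: "nat \<Rightarrow> nat \<Rightarrow> real \<Rightarrow> real \<Rightarrow> real \<Rightarrow> nat \<Rightarrow> real" where
  "E_sto a b \<beta> Cs Cz n =
     ln (lam a b n) * lam a b n powr (- 1 / 2) * sqrt (rr a b \<beta> Cs Cz (n - 1)) * Cz"

definition good_params ::
  "real \<Rightarrow> real \<Rightarrow> real \<Rightarrow> real \<Rightarrow> real \<Rightarrow> nat \<Rightarrow> nat \<Rightarrow> real \<Rightarrow> real \<Rightarrow> real \<Rightarrow> bool" where
  "good_params \<alpha> \<kappa> \<gamma> \<nu> C a b \<beta> Cs Cz \<longleftrightarrow>
     (\<forall>n\<ge>1.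
        mu a b n \<le> lam a b n
      \<and> ell a b n \<le> 1
      \<and> lam a b n \<in> \<nat>
      \<and> 12 * lam a b n \<le> 4 * mu a b (n + 1)
      \<and> 10 \<le> mu a b n
      \<and> 48 * lam a b n \<le> lam a b (n + 1)
      \<and> C * (E_miss a b \<beta> Cs Cz n + E_com \<alpha> \<kappa> a b \<beta> Cs Cz n + E_time a b \<beta> Cs Cz n
             + E_dis \<gamma> \<nu> a b \<beta> Cs Cz n + E_trans a b \<beta> Cs Cz n + E_sto a b \<beta> Cs Cz n)
          \<le> rr a b \<beta> Cs Cz n)"

end

theory Submission
  imports Defs
begin

text \<open>Write T for \<open>lam a b (n - 1)\<close>, so that \<open>lam a b n = T ^ b\<close>, and put
  \<open>R = Cs * (Cz\<^sup>2 + 1) * a powr \<beta>\<close>, which dominates 1, \<open>Cz\<^sup>2\<close> and every \<open>r\<^sub>k\<close>. With the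
  margin \<open>\<eta> = b * \<beta>\<close> one has \<open>r\<^sub>n = T powr (-\<eta>) * R\<close>. Thanks to the tower growth every error
  term at level n is a constant times \<open>ln T * T powr e * R\<close>: the weighted sums \<open>SS\<close> cost only a
  factor \<open>T powr \<eta>\<close> once \<open>a powr \<eta> \<ge> 8\<close>, and the hypotheses \<open>b > 1 + 1/\<alpha>\<close>, \<open>\<kappa> > 1/2\<close>,
  \<open>\<gamma> < 3/2\<close> are exactly what make every exponent \<open>e \<le> -2\<eta>\<close> for small \<open>\<eta>\<close>. So the total
  error is a constant times \<open>ln T * T powr (-\<eta>) * r\<^sub>n\<close>, and a large choice of \<open>a\<close> makes the
  prefactor at most 1.\<close>

lemma filterlim_powr_at_top:
  fixes d :: real
  assumes "d > 0"
  shows "filterlim (\<lambda>T. T powr d) at_top at_top"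
proof -
  have "filterlim (\<lambda>T. exp (d * ln T)) at_top at_top"
    by (intro filterlim_compose[OF exp_at_top]
        filterlim_tendsto_pos_mult_at_top[OF tendsto_const assms ln_at_top])
  then show ?thesis
    by (rule filterlim_cong[THEN iffD1, rotated -1])
       (auto simp: powr_def eventually_at_top_dense intro!: exI[of _ 0])
qed

lemma ln_mult_powr_eventually_le_1:
  fixes M d :: real
  assumes "d > 0"
  shows "\<exists>T0. \<forall>T\<ge>T0. M * ln T * T powr (-d) \<le> 1"
proof -
  have "((\<lambda>T. M / d * (ln (T powr d) / T powr d)) \<longlongrightarrow> M / d * 0) at_top"
    by (intro tendsto_mult_left filterlim_compose[OF ln_x_over_x_tendsto_0 filterlim_powr_at_top[OF assms]])
  moreover have "\<forall>\<^sub>F T in at_top. M / d * (ln (T powr d) / T powr d) = M * ln T * T powr (-d)"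
    using eventually_gt_at_top[of 0]
    by eventually_elim (use assms in \<open>simp add: powr_minus divide_inverse\<close>)
  ultimately have "((\<lambda>T. M * ln T * T powr (-d)) \<longlongrightarrow> 0) at_top"
    by (simp add: tendsto_cong)
  then have "\<forall>\<^sub>F T in at_top. M * ln T * T powr (-d) < 1"
    by (rule order_tendstoD) simp
  then show ?thesis
    unfolding eventually_at_top_linorder by (meson less_imp_le)
qed

lemma lam_0: "lam a b 0 = real a"
  by (simp add: lam_def)

lemma lam_Suc: "lam a b (Suc m) = lam a b m ^ b"
  by (simp add: lam_def power_mult[symmetric] mult.commute)

lemma lam_ge_1: "a \<ge> 1 \<Longrightarrow> lam a b n \<ge> 1"
  by (simp add: lam_def)

lemma lam_in_Nats: "lam a b n \<in> \<nat>"
  unfolding lam_def by (metis of_nat_in_Nats of_nat_power)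

lemma lam_mono:
  assumes "a \<ge> 1" "b \<ge> 1" "k \<le> m"
  shows "lam a b k \<le> lam a b m"
proof -
  have "b ^ k \<le> b ^ m" using assms by (intro power_increasing) auto
  then show ?thesis unfolding lam_def using assms by (intro power_increasing) auto
qed

lemma lam_ge_a: "a \<ge> 1 \<Longrightarrow> b \<ge> 1 \<Longrightarrow> real a \<le> lam a b m"
  using lam_mono[of a b 0 m] by (simp add: lam_0)

lemma power_le_lam:
  assumes "a \<ge> 1" "b \<ge> 2"
  shows "real a ^ m \<le> lam a b m"
proof -
  have "m \<le> 2 ^ m" using less_exp[of m] by linarith
  also have "(2::nat) ^ m \<le> b ^ m" using assms by (intro power_mono) auto
  finally show ?thesis unfolding lam_def using assms by (intro power_increasing) auto
qed

lemma lam_Suc_powr: "a \<ge> 1 \<Longrightarrow> lam a b (Suc m) powr s = lam a b m powr (real b * s)"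
  using lam_ge_1[of a b m] by (simp add: lam_Suc powr_realpow[symmetric] powr_powr)

lemma lam_Suc_eq_powr: "a \<ge> 1 \<Longrightarrow> lam a b (Suc m) = lam a b m powr real b"
  using lam_ge_1[of a b m] by (simp add: lam_Suc powr_realpow)

lemma ln_lam_Suc: "a \<ge> 1 \<Longrightarrow> ln (lam a b (Suc m)) = real b * ln (lam a b m)"
  using lam_ge_1[of a b m] by (simp add: lam_Suc ln_realpow)

lemma ell_powr: "a \<ge> 1 \<Longrightarrow> ell a b k powr s = lam a b k powr (-s)"
  using lam_ge_1[of a b k] by (simp add: ell_def powr_def ln_inverse)

lemma mu_Suc: "a \<ge> 1 \<Longrightarrow> mu a b (Suc m) = lam a b m powr ((1 + real b) / 2)"
  using lam_ge_1[of a b m]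
  by (simp add: mu_def lam_Suc powr_half_sqrt_powr powr_add powr_realpow)

lemma mu_le_lam:
  assumes "a \<ge> 1" "b \<ge> 1"
  shows "mu a b n \<le> lam a b n"
proof -
  have "lam a b (n - 1) * lam a b n \<le> (lam a b n)\<^sup>2"
    using lam_mono[OF assms, of "n - 1" n] lam_ge_1[OF assms(1), of b n]
    by (simp add: power2_eq_square)
  then show ?thesis
    unfolding mu_def using lam_ge_1[OF assms(1), of b n] by (intro real_le_lsqrt) auto
qed

lemma ell_le_1: "a \<ge> 1 \<Longrightarrow> ell a b n \<le> 1"
  using lam_ge_1[of a b n] by (simp add: ell_def inverse_le_1_iff)

lemma lam_sq_le_lam_Suc:
  assumes "a \<ge> 1" "b \<ge> 2"
  shows "lam a b n * lam a b n \<le> lam a b (Suc n)"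
proof -
  have "lam a b n \<ge> 1" using assms lam_ge_1 by simp
  then have "(lam a b n)\<^sup>2 \<le> lam a b n ^ b" using assms by (intro power_increasing) auto
  then show ?thesis by (simp add: lam_Suc power2_eq_square)
qed

lemma lam_growth:
  assumes "a \<ge> 48" "b \<ge> 2"
  shows "48 * lam a b n \<le> lam a b (n + 1)"
proof -
  have "48 \<le> lam a b n" using lam_ge_a[of a b n] assms by simp
  then have "48 * lam a b n \<le> lam a b n * lam a b n" by (intro mult_right_mono) auto
  with lam_sq_le_lam_Suc[of a b n] assms show ?thesis by simp
qed

lemma lam_le_mu_Suc:
  assumes "a \<ge> 48" "b \<ge> 2"
  shows "3 * lam a b n \<le> mu a b (n + 1)"
proof -
  have "(3 * lam a b n)\<^sup>2 \<le> lam a b n * (48 * lam a b n)"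
    by (simp add: power2_eq_square)
  also have "\<dots> \<le> lam a b n * lam a b (n + 1)"
    using lam_growth[OF assms] lam_ge_1[of a b n] assms by (intro mult_left_mono) auto
  finally show ?thesis unfolding mu_def by (intro real_le_rsqrt) simp
qed

lemma mu_ge_10:
  assumes "a \<ge> 48" "b \<ge> 1"
  shows "10 \<le> mu a b n"
proof -
  have "48 \<le> lam a b k" for k using lam_ge_a[of a b k] assms by simp
  then have "48 \<le> lam a b (n - 1)" "48 \<le> lam a b n" by blast+
  then have "(10::real)\<^sup>2 \<le> lam a b (n - 1) * lam a b n"
    using mult_mono[of 48 "lam a b (n - 1)" 48 "lam a b n"] by (simp add: power2_eq_square)
  then show ?thesis unfolding mu_def by (rule real_le_rsqrt)
qed

lemma powr_mult_two_factors_le: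
  fixes T R u v :: real
  assumes "0 \<le> u" "u \<le> T powr p * sqrt R" "0 \<le> v" "v \<le> T powr q * sqrt R" "R \<ge> 0"
  shows "T powr c * T powr d * u * v \<le> T powr (c + d + p + q) * R"
proof -
  have "T powr c * T powr d * u * v \<le> T powr c * T powr d * (T powr p * sqrt R) * (T powr q * sqrt R)"
    using assms by (intro mult_mono mult_nonneg_nonneg) auto
  also have "\<dots> = T powr (c + d + p + q) * R"
    using assms(5) by (simp add: powr_add algebra_simps)
  finally show ?thesis .
qed

lemma SS_le:
  assumes "a \<ge> 1" "b \<ge> 1" "\<theta> \<ge> 0" "G \<ge> 0"
    and rr_nonneg: "\<And>k. rr a b \<beta> Cs Cz k \<ge> 0"
    and sqrt_rr_le: "\<And>k. sqrt (rr a b \<beta> Cs Cz k) \<le> G"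
  shows "SS a b \<beta> Cs Cz m \<theta> \<le> 8 ^ m * lam a b m powr \<theta> * G"
proof -
  have "SS a b \<beta> Cs Cz m \<theta> \<le> real (card {1..m}) * (4 ^ m * lam a b m powr \<theta> * G)"
    unfolding SS_def
  proof (rule sum_bounded_above)
    fix k assume k: "k \<in> {1..m}"
    have "ell a b k powr (-\<theta>) \<le> lam a b m powr \<theta>"
      using lam_mono[OF assms(1,2), of k m] lam_ge_1[OF assms(1), of b k] k assms(3)
      by (simp add: ell_powr[OF assms(1)] powr_mono2)
    moreover have "(4::real) ^ (m - k) \<le> 4 ^ m" by (intro power_increasing) auto
    ultimately show "4 ^ (m - k) * ell a b k powr (-\<theta>) * sqrt (rr a b \<beta> Cs Cz (k - 1))
        \<le> 4 ^ m * lam a b m powr \<theta> * G"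
      using sqrt_rr_le[of "k - 1"] rr_nonneg[of "k - 1"] by (intro mult_mono) auto
  qed
  also have "\<dots> = (real m * 4 ^ m) * (lam a b m powr \<theta> * G)" by simp
  also have "\<dots> \<le> 8 ^ m * (lam a b m powr \<theta> * G)"
  proof (rule mult_right_mono)
    have "real m \<le> 2 ^ m" using less_exp[of m] by (metis less_imp_le of_nat_le_iff of_nat_numeral of_nat_power)
    then have "real m * 4 ^ m \<le> 2 ^ m * 4 ^ m" by (intro mult_right_mono) auto
    then show "real m * 4 ^ m \<le> 8 ^ m" by (simp add: power_mult_distrib[symmetric])
  qed (use assms in simp)
  finally show ?thesis by (simp add: mult_ac)
qed

locale tower_parameters =
  fixes \<alpha> \<kappa> \<gamma> \<nu> C :: real and a b :: nat and \<beta> \<eta> Cs Cz :: real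
  assumes alpha_pos: "\<alpha> > 0"
    and b_ge_2: "b \<ge> 2"
    and a_ge_48: "a \<ge> 48"
    and eta_pos: "\<eta> > 0"
    and b_beta: "real b * \<beta> = \<eta>"
    and eta_alpha: "4 * \<eta> \<le> \<alpha> * (real b - 1) - 1"
    and eta_kappa: "4 * \<eta> \<le> \<kappa> - 1 / 2"
    and eta_half: "4 * \<eta> \<le> 1 / 2"
    and eta_gamma: "4 * \<eta> \<le> real b * (3 / 2 - \<gamma>)"
    and eight_le_a_powr: "8 \<le> real a powr \<eta>"
    and C_nonneg: "C \<ge> 0"
    and a_large: "\<forall>T \<ge> real a. C * (10 * real b + 3) * (\<bar>\<nu>\<bar> + 1) * ln T * T powr (-\<eta>) \<le> 1"
    and Cs_ge_1: "Cs \<ge> 1"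
    and Cz_nonneg: "Cz \<ge> 0"
begin

definition R :: real where
  "R = Cs * (Cz\<^sup>2 + 1) * real a powr \<beta>"

text \<open>By \<open>error_scale_eq\<close>, \<open>error_scale m = ln T * T powr (-\<eta>) * rr (Suc m)\<close> with \<open>T = lam a b m\<close>.
  Every error term at level \<open>Suc m\<close> is a bounded multiple of it, and the spare factor
  \<open>T powr (-\<eta>)\<close> absorbs \<open>C\<close> and the logarithm through \<open>a_large\<close>.\<close>

definition error_scale :: "nat \<Rightarrow> real" where
  "error_scale m = ln (lam a b m) * lam a b m powr (- 2 * \<eta>) * R"

lemma a_ge_1: "a \<ge> 1" and b_ge_1: "b \<ge> 1"
  using a_ge_48 b_ge_2 by auto

lemma beta_pos: "\<beta> > 0"
  using b_beta eta_pos zero_less_mult_iff[of "real b" \<beta>] by simp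

lemma Cz_sq_le_R: "Cz\<^sup>2 \<le> R" and R_ge_1: "R \<ge> 1"
proof -
  have "1 \<le> real a powr \<beta>" using a_ge_1 beta_pos by (intro ge_one_powr_ge_zero) auto
  moreover have "Cz\<^sup>2 + 1 \<le> Cs * (Cz\<^sup>2 + 1)"
    using Cs_ge_1 mult_right_mono[of 1 Cs "Cz\<^sup>2 + 1"] by simp
  ultimately have "Cz\<^sup>2 + 1 \<le> R" unfolding R_def
    using mult_mono[of "Cz\<^sup>2 + 1" "Cs * (Cz\<^sup>2 + 1)" 1 "real a powr \<beta>"] Cs_ge_1
    by (simp add: add_pos_nonneg)
  moreover have "Cz\<^sup>2 \<ge> 0" by simp
  ultimately show "Cz\<^sup>2 \<le> R" "R \<ge> 1" by linarith+
qed

lemma Cz_le_sqrt_R: "Cz \<le> sqrt R"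
  using Cz_sq_le_R by (rule real_le_rsqrt)

lemma rr_eq: "rr a b \<beta> Cs Cz k = R * lam a b k powr (-\<beta>)"
  by (simp add: rr_def R_def lam_0)

lemma rr_nonneg: "rr a b \<beta> Cs Cz k \<ge> 0"
  using R_ge_1 by (simp add: rr_eq)

lemma SS_nonneg: "SS a b \<beta> Cs Cz m \<theta> \<ge> 0"
  unfolding SS_def using rr_nonneg by (intro sum_nonneg mult_nonneg_nonneg) auto

lemma rr_le_R: "rr a b \<beta> Cs Cz k \<le> R"
proof -
  have "lam a b k powr (-\<beta>) \<le> 1"
    using lam_ge_1[OF a_ge_1, of b k] beta_pos by (simp add: powr_minus inverse_le_1_iff ge_one_powr_ge_zero)
  then show ?thesis using R_ge_1 by (simp add: rr_eq mult_left_le)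
qed

lemma sqrt_rr_le: "sqrt (rr a b \<beta> Cs Cz k) \<le> sqrt R"
  using rr_le_R by simp

lemma rr_Suc: "rr a b \<beta> Cs Cz (Suc m) = lam a b m powr (-\<eta>) * R"
  by (simp add: rr_eq lam_Suc_powr[OF a_ge_1] b_beta[symmetric])

lemma SS_le_powr: "\<theta> \<ge> 0 \<Longrightarrow> SS a b \<beta> Cs Cz m \<theta> \<le> lam a b m powr (\<eta> + \<theta>) * sqrt R"
proof -
  assume "\<theta> \<ge> 0"
  have "(8::real) ^ m \<le> (real a powr \<eta>) ^ m"
    using eight_le_a_powr by (intro power_mono) auto
  also have "\<dots> = (real a ^ m) powr \<eta>"
    using a_ge_1 by (simp add: powr_realpow[symmetric] powr_powr mult.commute)
  also have "\<dots> \<le> lam a b m powr \<eta>"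
    using power_le_lam[OF a_ge_1 b_ge_2] eta_pos by (intro powr_mono2) auto
  finally have "8 ^ m * lam a b m powr \<theta> * sqrt R \<le> lam a b m powr \<eta> * lam a b m powr \<theta> * sqrt R"
    using R_ge_1 by (intro mult_right_mono) auto
  with SS_le[OF a_ge_1 b_ge_1 \<open>\<theta> \<ge> 0\<close> _ rr_nonneg sqrt_rr_le, of m] R_ge_1 show ?thesis
    by (simp add: powr_add)
qed

lemma le_error_scale:
  assumes "x \<le> lam a b m powr e * R" "e \<le> -2 * \<eta>"
  shows "ln (lam a b m) * x \<le> error_scale m"
proof -
  have "lam a b m powr e \<le> lam a b m powr (-2 * \<eta>)"
    using assms(2) lam_ge_1[OF a_ge_1] by (intro powr_mono) auto
  then have "lam a b m powr e * R \<le> lam a b m powr (-2 * \<eta>) * R"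
    using R_ge_1 by (intro mult_right_mono) auto
  then have "x \<le> lam a b m powr (-2 * \<eta>) * R"
    using assms(1) by linarith
  moreover have "ln (lam a b m) \<ge> 0" using lam_ge_1[OF a_ge_1] by simp
  ultimately show ?thesis unfolding error_scale_def by (simp add: mult_left_mono mult.assoc)
qed

lemma ln_lam_ge_1: "ln (lam a b m) \<ge> 1"
proof -
  have "exp 1 \<le> lam a b m"
    using exp_le lam_ge_a[OF a_ge_1 b_ge_1, of m] a_ge_48 by linarith
  then show ?thesis using lam_ge_1[OF a_ge_1, of b m] by (simp add: ln_ge_iff)
qed

lemma le_error_scale_product:
  assumes "0 \<le> u" "u \<le> lam a b m powr p * sqrt R" "0 \<le> v" "v \<le> lam a b m powr q * sqrt R"
    and "c + d + p + q \<le> -2 * \<eta>"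
  shows "ln (lam a b m) * (lam a b m powr c * lam a b m powr d * u * v) \<le> error_scale m"
  using R_ge_1 by (intro le_error_scale[OF powr_mult_two_factors_le[OF assms(1-4)] assms(5)]) simp

text \<open>The trivial factor \<open>lam a b m powr 0\<close> puts these bounds into the shape required by
  \<open>le_error_scale_product\<close>.\<close>

lemma Cz_le_lam_powr: "Cz \<le> lam a b m powr 0 * sqrt R"
  using Cz_le_sqrt_R lam_ge_1[OF a_ge_1, of b m] by simp

lemma sqrt_rr_le_lam_powr: "sqrt (rr a b \<beta> Cs Cz k) \<le> lam a b m powr 0 * sqrt R"
  using sqrt_rr_le lam_ge_1[OF a_ge_1, of b m] by simp

lemma one_le_lam_powr: "1 \<le> lam a b m powr 0 * sqrt R"
  using R_ge_1 lam_ge_1[OF a_ge_1, of b m] by simp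

lemma rr_powr_quarter_le_lam_powr: "rr a b \<beta> Cs Cz k powr (1/4) \<le> lam a b m powr 0 * sqrt R"
proof -
  have "rr a b \<beta> Cs Cz k powr (1/4) \<le> R powr (1/4)"
    using rr_nonneg rr_le_R by (intro powr_mono2) auto
  also have "\<dots> \<le> R powr (1/2)"
    using R_ge_1 by (intro powr_mono) auto
  finally show ?thesis using lam_ge_1[OF a_ge_1, of b m] R_ge_1 by (simp add: powr_half_sqrt)
qed

lemma E_miss_le: "E_miss a b \<beta> Cs Cz (Suc m) \<le> (2 * real b + 3) * error_scale m"
proof -
  define T where "T = lam a b m"
  define L where "L = ln T"
  have T: "T \<ge> 1" and L: "L \<ge> 1"
    unfolding T_def L_def using lam_ge_1[OF a_ge_1] ln_lam_ge_1 by auto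
  have ratio1: "T / T powr ((1 + real b) / 2) = T powr ((1 - real b) / 2)"
    using T powr_diff[of T 1 "(1 + real b) / 2"] by (simp add: field_simps)
  have ratio2: "T powr ((1 + real b) / 2) / T powr real b = T powr ((1 - real b) / 2)"
    by (simp add: powr_diff[symmetric] field_simps)
  have ratio3: "T / T powr real b = T powr (1 - real b)"
    using T by (simp add: powr_diff)
  have square: "(T powr ((1 - real b) / 2) + T powr ((1 - real b) / 2))\<^sup>2 = 4 * T powr (1 - real b)"
  proof -
    have "(T powr ((1 - real b) / 2))\<^sup>2 = T powr (real 2 * ((1 - real b) / 2))"
      using T by (intro powr_power) simp
    also have "real 2 * ((1 - real b) / 2) = 1 - real b" by simp
    finally have "(T powr ((1 - real b) / 2))\<^sup>2 = T powr (1 - real b)" .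
    then show ?thesis by (simp add: power2_eq_square[symmetric] power_mult_distrib)
  qed
  have "E_miss a b \<beta> Cs Cz (Suc m)
      = ((1 + real b) / 2 * L * (4 * T powr (1 - real b)) + T powr (1 - real b)) * (R * T powr (-\<beta>))"
    unfolding E_miss_def diff_Suc_1 mu_Suc[OF a_ge_1] lam_Suc_eq_powr[OF a_ge_1] rr_eq
    by (simp only: T_def[symmetric] L_def[symmetric] ratio1 ratio2 ratio3 square ln_powr)
  also have "\<dots> \<le> (2 * real b + 3) * L * T powr (1 - real b) * (R * T powr (-\<beta>))"
  proof (rule mult_right_mono)
    have "T powr (1 - real b) \<le> L * T powr (1 - real b)"
      using L mult_right_mono[of 1 L "T powr (1 - real b)"] by simp
    then show "(1 + real b) / 2 * L * (4 * T powr (1 - real b)) + T powr (1 - real b)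
        \<le> (2 * real b + 3) * L * T powr (1 - real b)" by (simp add: field_simps)
  qed (use R_ge_1 in simp)
  also have "\<dots> = (2 * real b + 3) * (L * (T powr (1 - real b - \<beta>) * R))"
    by (simp add: powr_add[symmetric])
  also have "\<dots> \<le> (2 * real b + 3) * error_scale m"
    unfolding L_def T_def using b_ge_2 eta_half beta_pos
    by (intro mult_left_mono le_error_scale) auto
  finally show ?thesis .
qed

lemma E_com_le: "E_com \<alpha> \<kappa> a b \<beta> Cs Cz (Suc m) \<le> 5 * real b * error_scale m"
proof -
  define T where "T = lam a b m"
  define L where "L = ln T"
  define SA where "SA = SS a b \<beta> Cs Cz m \<alpha>"
  define S0 where "S0 = SS a b \<beta> Cs Cz m 0"
  have SA: "0 \<le> SA" "SA \<le> T powr (\<eta> + \<alpha>) * sqrt R"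
    unfolding SA_def T_def using SS_nonneg SS_le_powr alpha_pos by auto
  have S0: "0 \<le> S0" "S0 \<le> T powr \<eta> * sqrt R"
    unfolding S0_def T_def using SS_nonneg SS_le_powr[of 0] by auto
  note Cz = Cz_nonneg Cz_le_lam_powr[of m, folded T_def]
  note bound = le_error_scale_product[of _ m, folded T_def L_def]
  have "E_com \<alpha> \<kappa> a b \<beta> Cs Cz (Suc m)
      = real b * (L * (T powr 1 * T powr (real b * (-\<alpha>)) * SA * S0)
        + L * (T powr (1/2) * T powr (real b * (-\<alpha>)) * SA * Cz)
        + L * (T powr (1/2) * T powr (-\<kappa>) * S0 * Cz)
        + L * (T powr (real b * (-\<alpha>)) * T powr 0 * Cz * Cz)
        + L * (T powr (-\<kappa>) * T powr 0 * Cz * Cz))"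
    unfolding E_com_def diff_Suc_1 ln_lam_Suc[OF a_ge_1] ell_powr[OF a_ge_1] lam_Suc_powr[OF a_ge_1]
    unfolding T_def[symmetric] L_def[symmetric] SA_def[symmetric] S0_def[symmetric]
    using lam_ge_1[OF a_ge_1, of b m, folded T_def] by (simp add: powr_half_sqrt power2_eq_square algebra_simps)
  also have "\<dots> \<le> real b * (5 * error_scale m)"
  proof -
    have "\<alpha> * (real b - 1) = real b * \<alpha> - \<alpha>" by (simp add: algebra_simps)
    note exps = this eta_alpha eta_kappa eta_pos alpha_pos
    have "L * (T powr 1 * T powr (real b * (-\<alpha>)) * SA * S0) \<le> error_scale m"
      by (rule bound[OF SA S0]) (use exps in simp)
    moreover have "L * (T powr (1/2) * T powr (real b * (-\<alpha>)) * SA * Cz) \<le> error_scale m"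
      by (rule bound[OF SA Cz]) (use exps in simp)
    moreover have "L * (T powr (1/2) * T powr (-\<kappa>) * S0 * Cz) \<le> error_scale m"
      by (rule bound[OF S0 Cz]) (use exps in simp)
    moreover have "L * (T powr (real b * (-\<alpha>)) * T powr 0 * Cz * Cz) \<le> error_scale m"
      by (rule bound[OF Cz Cz]) (use exps in simp)
    moreover have "L * (T powr (-\<kappa>) * T powr 0 * Cz * Cz) \<le> error_scale m"
      by (rule bound[OF Cz Cz]) (use exps in simp)
    ultimately show ?thesis using b_ge_2 by (intro mult_left_mono) auto
  qed
  finally show ?thesis by simp
qed

lemma E_time_le: "E_time a b \<beta> Cs Cz (Suc m) \<le> real b * error_scale m"
proof -
  define T where "T = lam a b m"
  define L where "L = ln T"
  define Q where "Q = sqrt (rr a b \<beta> Cs Cz m)"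
  have Q: "0 \<le> Q" "Q \<le> T powr 0 * sqrt R"
    unfolding Q_def T_def using rr_nonneg sqrt_rr_le_lam_powr by auto
  have one: "0 \<le> (1::real)" "1 \<le> T powr 0 * sqrt R"
    unfolding T_def using one_le_lam_powr by auto
  have "E_time a b \<beta> Cs Cz (Suc m) = real b * (L * (T powr (real b * (-3/2)) * T powr real b * Q * 1))"
    unfolding E_time_def diff_Suc_1 ln_lam_Suc[OF a_ge_1] lam_Suc_powr[OF a_ge_1]
      ell_def inverse_inverse_eq lam_Suc_eq_powr[OF a_ge_1]
    by (simp add: T_def L_def Q_def powr_powr)
  also have "\<dots> \<le> real b * error_scale m"
    by (intro mult_left_mono le_error_scale_product[of _ m, folded T_def L_def, OF Q one])
       (use b_ge_2 eta_half in auto)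
  finally show ?thesis .
qed

lemma E_dis_le: "E_dis \<gamma> \<nu> a b \<beta> Cs Cz (Suc m) \<le> real b * \<bar>\<nu>\<bar> * error_scale m"
proof -
  define T where "T = lam a b m"
  define L where "L = ln T"
  define Q where "Q = rr a b \<beta> Cs Cz m powr (1/4)"
  have Q: "0 \<le> Q" "Q \<le> T powr 0 * sqrt R"
    unfolding Q_def T_def using rr_powr_quarter_le_lam_powr by auto
  have one: "0 \<le> (1::real)" "1 \<le> T powr 0 * sqrt R"
    unfolding T_def using one_le_lam_powr by auto
  have "E_dis \<gamma> \<nu> a b \<beta> Cs Cz (Suc m)
      = real b * \<bar>\<nu>\<bar> * (L * (T powr (real b * (\<gamma> - 3/2)) * T powr 0 * Q * 1))"
    unfolding E_dis_def diff_Suc_1 ln_lam_Suc[OF a_ge_1] lam_Suc_powr[OF a_ge_1]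
    using lam_ge_1[OF a_ge_1, of b m] by (simp add: T_def L_def Q_def)
  also have "\<dots> \<le> real b * \<bar>\<nu>\<bar> * error_scale m"
    by (intro mult_left_mono le_error_scale_product[of _ m, folded T_def L_def, OF Q one])
       (use eta_gamma eta_pos in \<open>auto simp: right_diff_distrib\<close>)
  finally show ?thesis .
qed

lemma E_trans_le: "E_trans a b \<beta> Cs Cz (Suc m) \<le> real b * error_scale m"
proof -
  define T where "T = lam a b m"
  define L where "L = ln T"
  define Q where "Q = sqrt (rr a b \<beta> Cs Cz m)"
  define S0 where "S0 = SS a b \<beta> Cs Cz m 0"
  have Q: "0 \<le> Q" "Q \<le> T powr 0 * sqrt R"
    unfolding Q_def T_def using rr_nonneg sqrt_rr_le_lam_powr by auto
  have S0: "0 \<le> S0" "S0 \<le> T powr \<eta> * sqrt R"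
    unfolding S0_def T_def using SS_nonneg SS_le_powr[of 0] by auto
  have "E_trans a b \<beta> Cs Cz (Suc m) = real b * (L * (T powr (1/2) * T powr (real b * (-1/2)) * Q * S0))"
    unfolding E_trans_def diff_Suc_1 ln_lam_Suc[OF a_ge_1] lam_Suc_powr[OF a_ge_1]
    using lam_ge_1[OF a_ge_1, of b m] by (simp add: T_def L_def Q_def S0_def powr_half_sqrt)
  also have "\<dots> \<le> real b * error_scale m"
    by (intro mult_left_mono le_error_scale_product[of _ m, folded T_def L_def, OF Q S0])
       (use b_ge_2 eta_half in auto)
  finally show ?thesis .
qed

lemma E_sto_le: "E_sto a b \<beta> Cs Cz (Suc m) \<le> real b * error_scale m"
proof -
  define T where "T = lam a b m"
  define L where "L = ln T"
  define Q where "Q = sqrt (rr a b \<beta> Cs Cz m)"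
  have Q: "0 \<le> Q" "Q \<le> T powr 0 * sqrt R"
    unfolding Q_def T_def using rr_nonneg sqrt_rr_le_lam_powr by auto
  note Cz = Cz_nonneg Cz_le_lam_powr[of m, folded T_def]
  have "E_sto a b \<beta> Cs Cz (Suc m) = real b * (L * (T powr (real b * (-1/2)) * T powr 0 * Q * Cz))"
    unfolding E_sto_def diff_Suc_1 ln_lam_Suc[OF a_ge_1] lam_Suc_powr[OF a_ge_1]
    using lam_ge_1[OF a_ge_1, of b m] by (simp add: T_def L_def Q_def)
  also have "\<dots> \<le> real b * error_scale m"
    by (intro mult_left_mono le_error_scale_product[of _ m, folded T_def L_def, OF Q Cz])
       (use b_ge_2 eta_half in auto)
  finally show ?thesis .
qed

lemma error_scale_nonneg: "error_scale m \<ge> 0"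
  unfolding error_scale_def using ln_lam_ge_1[of m] R_ge_1 by simp

lemma error_scale_eq: "error_scale m = ln (lam a b m) * lam a b m powr (-\<eta>) * rr a b \<beta> Cs Cz (Suc m)"
  by (simp add: error_scale_def rr_Suc powr_add[symmetric])

lemma total_error_le:
  "C * (E_miss a b \<beta> Cs Cz (Suc m) + E_com \<alpha> \<kappa> a b \<beta> Cs Cz (Suc m) + E_time a b \<beta> Cs Cz (Suc m)
        + E_dis \<gamma> \<nu> a b \<beta> Cs Cz (Suc m) + E_trans a b \<beta> Cs Cz (Suc m) + E_sto a b \<beta> Cs Cz (Suc m))
     \<le> rr a b \<beta> Cs Cz (Suc m)"
proof -
  define K where "K = (10 * real b + 3) * (\<bar>\<nu>\<bar> + 1)"
  have "E_miss a b \<beta> Cs Cz (Suc m) + E_com \<alpha> \<kappa> a b \<beta> Cs Cz (Suc m) + E_time a b \<beta> Cs Cz (Suc m)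
        + E_dis \<gamma> \<nu> a b \<beta> Cs Cz (Suc m) + E_trans a b \<beta> Cs Cz (Suc m) + E_sto a b \<beta> Cs Cz (Suc m)
      \<le> (2 * real b + 3) * error_scale m + 5 * real b * error_scale m + real b * error_scale m
        + real b * \<bar>\<nu>\<bar> * error_scale m + real b * error_scale m + real b * error_scale m"
    using E_miss_le E_com_le E_time_le E_dis_le E_trans_le E_sto_le by (intro add_mono)
  also have "\<dots> = (10 * real b + 3 + real b * \<bar>\<nu>\<bar>) * error_scale m"
    by (simp add: algebra_simps)
  also have "\<dots> \<le> K * error_scale m"
    unfolding K_def using error_scale_nonneg by (intro mult_right_mono) (auto simp: algebra_simps)
  finally have "C * (E_miss a b \<beta> Cs Cz (Suc m) + E_com \<alpha> \<kappa> a b \<beta> Cs Cz (Suc m)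
        + E_time a b \<beta> Cs Cz (Suc m) + E_dis \<gamma> \<nu> a b \<beta> Cs Cz (Suc m)
        + E_trans a b \<beta> Cs Cz (Suc m) + E_sto a b \<beta> Cs Cz (Suc m))
      \<le> (C * K * ln (lam a b m) * lam a b m powr (-\<eta>)) * rr a b \<beta> Cs Cz (Suc m)"
    using C_nonneg by (simp add: error_scale_eq mult_left_mono mult_ac)
  also have "\<dots> \<le> 1 * rr a b \<beta> Cs Cz (Suc m)"
    using a_large lam_ge_a[OF a_ge_1 b_ge_1, of m] rr_nonneg
    by (intro mult_right_mono) (auto simp: K_def mult_ac)
  finally show ?thesis by simp
qed

lemma good_params_hold: "good_params \<alpha> \<kappa> \<gamma> \<nu> C a b \<beta> Cs Cz"
  unfolding good_params_def
proof (intro allI impI)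
  fix n :: nat
  assume "n \<ge> 1"
  then obtain m where "n = Suc m" by (cases n) auto
  then show "mu a b n \<le> lam a b n \<and> ell a b n \<le> 1 \<and> lam a b n \<in> \<nat>
      \<and> 12 * lam a b n \<le> 4 * mu a b (n + 1) \<and> 10 \<le> mu a b n \<and> 48 * lam a b n \<le> lam a b (n + 1)
      \<and> C * (E_miss a b \<beta> Cs Cz n + E_com \<alpha> \<kappa> a b \<beta> Cs Cz n + E_time a b \<beta> Cs Cz n
             + E_dis \<gamma> \<nu> a b \<beta> Cs Cz n + E_trans a b \<beta> Cs Cz n + E_sto a b \<beta> Cs Cz n)
          \<le> rr a b \<beta> Cs Cz n"
    using mu_le_lam[OF a_ge_1 b_ge_1] ell_le_1[OF a_ge_1] lam_in_Nats
      lam_le_mu_Suc[OF a_ge_48 b_ge_2] mu_ge_10[OF a_ge_48 b_ge_1] lam_growth[OF a_ge_48 b_ge_2]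
      total_error_le
    by fastforce
qed

end

lemma exists_good_params:
  fixes \<alpha> \<kappa> \<gamma> \<nu> C :: real and b :: nat
  assumes \<alpha>: "\<alpha> > 0" and \<kappa>: "\<kappa> > 1 / 2" and \<gamma>: "\<gamma> < 3 / 2" and C: "C > 1"
    and b: "real b > 1 + 1 / \<alpha>"
  shows "\<exists>(a :: nat) (\<beta> :: real). 0 < \<beta> \<and> \<beta> < 1 \<and> \<beta> < (\<alpha> * (real b - 1) - 1) / real b \<and>
           (\<forall>Cs Cz :: real. Cs \<ge> 1 \<and> Cz \<ge> 0 \<longrightarrow> good_params \<alpha> \<kappa> \<gamma> \<nu> C a b \<beta> Cs Cz)"
proof -
  have "1 / \<alpha> > 0" using \<alpha> by simp
  then have b_ge_2: "b \<ge> 2" using b by linarith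
  have "\<alpha> * (real b - 1) > \<alpha> * (1 / \<alpha>)"
    using b \<alpha> by (intro mult_strict_left_mono) auto
  then have gap: "\<alpha> * (real b - 1) - 1 > 0" using \<alpha> by simp
  have "real b * (3 / 2 - \<gamma>) > 0" using \<gamma> b_ge_2 by simp
  define \<eta> where "\<eta> = min (min (\<alpha> * (real b - 1) - 1) (\<kappa> - 1 / 2)) (min (1 / 2) (real b * (3 / 2 - \<gamma>))) / 4"
  have \<eta>: "\<eta> > 0" "4 * \<eta> \<le> \<alpha> * (real b - 1) - 1" "4 * \<eta> \<le> \<kappa> - 1 / 2" "4 * \<eta> \<le> 1 / 2"
    "4 * \<eta> \<le> real b * (3 / 2 - \<gamma>)"
    unfolding \<eta>_def using gap \<kappa> \<open>real b * (3 / 2 - \<gamma>) > 0\<close> by (auto simp: min_def)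
  define \<beta> where "\<beta> = \<eta> / real b"
  have b_beta: "real b * \<beta> = \<eta>" unfolding \<beta>_def using b_ge_2 by simp
  obtain T0 where T0: "\<forall>T\<ge>T0. C * (10 * real b + 3) * (\<bar>\<nu>\<bar> + 1) * ln T * T powr (-\<eta>) \<le> 1"
    using ln_mult_powr_eventually_le_1[OF \<eta>(1)] by blast
  define a where "a = nat \<lceil>max (max 48 T0) (8 powr (1 / \<eta>))\<rceil>"
  have a: "real a \<ge> 48" "real a \<ge> T0" "real a \<ge> 8 powr (1 / \<eta>)"
    unfolding a_def by linarith+
  have "8 = (8 powr (1 / \<eta>)) powr \<eta>" using \<eta>(1) by (simp add: powr_powr)
  also have "\<dots> \<le> real a powr \<eta>" using a(3) \<eta>(1) by (intro powr_mono2) auto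
  finally have eight: "8 \<le> real a powr \<eta>" .
  have "tower_parameters \<alpha> \<kappa> \<gamma> \<nu> C a b \<beta> \<eta> Cs Cz" if "Cs \<ge> 1" "Cz \<ge> 0" for Cs Cz
    using \<alpha> b_ge_2 a T0 \<eta> b_beta eight C that by unfold_locales auto
  then have "good_params \<alpha> \<kappa> \<gamma> \<nu> C a b \<beta> Cs Cz" if "Cs \<ge> 1" "Cz \<ge> 0" for Cs Cz
    using that tower_parameters.good_params_hold by blast
  moreover have "\<beta> < 1" "\<beta> > 0" "\<beta> < (\<alpha> * (real b - 1) - 1) / real b"
    unfolding \<beta>_def using \<eta> b_ge_2 by (auto simp: divide_strict_right_mono)
  ultimately show ?thesis by blast
qed

theorem mainTheorem2:
  fixes \<alpha> \<kappa> \<gamma> \<nu> :: real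
  assumes "\<alpha> > 0" and "\<kappa> > 1 / 2" and "\<gamma> < 3 / 2"
  shows "\<forall>C :: real. C > 1 \<longrightarrow>
           (\<exists>(a :: nat) (b :: nat) (\<beta> :: real). 0 < \<beta> \<and> \<beta> < 1 \<and>
              (\<forall>Cs Cz :: real. Cs \<ge> 1 \<and> Cz \<ge> 0 \<longrightarrow> good_params \<alpha> \<kappa> \<gamma> \<nu> C a b \<beta> Cs Cz))
         \<and> (\<forall>b :: nat. real b > 1 + 1 / \<alpha> \<longrightarrow>
              (\<exists>(a :: nat) (\<beta> :: real). 0 < \<beta> \<and> \<beta> < 1
                 \<and> \<beta> < (\<alpha> * (real b - 1) - 1) / real b \<and>
                 (\<forall>Cs Cz :: real. Cs \<ge> 1 \<and> Cz \<ge> 0 \<longrightarrow> good_params \<alpha> \<kappa> \<gamma> \<nu> C a b \<beta> Cs Cz)))"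
proof (intro allI impI conjI)
  fix C :: real
  assume C: "C > 1"
  have "real (nat \<lceil>1 + 1 / \<alpha>\<rceil> + 1) > 1 + 1 / \<alpha>" by linarith
  from exists_good_params[OF assms C this]
  show "\<exists>a b \<beta>. 0 < \<beta> \<and> \<beta> < 1 \<and>
      (\<forall>Cs Cz. Cs \<ge> 1 \<and> Cz \<ge> 0 \<longrightarrow> good_params \<alpha> \<kappa> \<gamma> \<nu> C a b \<beta> Cs Cz)"
    by blast
  fix b :: nat
  assume "real b > 1 + 1 / \<alpha>"
  from exists_good_params[OF assms C this]
  show "\<exists>a \<beta>. 0 < \<beta> \<and> \<beta> < 1 \<and> \<beta> < (\<alpha> * (real b - 1) - 1) / real b \<and>
      (\<forall>Cs Cz. Cs \<ge> 1 \<and> Cz \<ge> 0 \<longrightarrow> good_params \<alpha> \<kappa> \<gamma> \<nu> C a b \<beta> Cs Cz)" .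
qed

end
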